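(* Let $L$ be a finite set of vertical lines and $R$ a finite set of horizontal closed rays in the plane such that, for every horizontal line containing a ray of $R$, the rays of $R$ on that line are exactly one leftward ray and one rightward ray, and these two rays have nonempty intersection (a closed segment, possibly a single point). Let $E$ be the set of these intersection segments (one per horizontal line carrying rays). Let $G$ be the bipartite graph with vertex classes $L$ and $E$ in which $\ell\in L$ and $e\in E$ are adjacent iff $\ell\cap e\neq\emptyset$, and let $m$ be the size of a maximum matching in $G$. Then there exists a minimum-cardinality hitting set $P$ for $L\cup R$ containing $m$ points $p_1,\dots,p_m$ together with pairwise distinct lines $\ell_1,\dots,\ell_m\in L$ and pairwise distinct segments $e_1,\dots,e_m\in E$ such that $p_i\in \ell_i\cap e_i$ for all $i$.
   Context: A hitting set for a family of subsets of the plane is a finite set of points such that every member of the family contains at least one of the points. A leftward (resp. rightward) horizontal ray is a set $\{(t,b):t\le a\}$ (resp. $\{(t,b):t\ge a\}$). *)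

theory Defs
  imports Complex_Main
begin

definition vertical_line :: "(real \<times> real) set \<Rightarrow> bool" where
  "vertical_line S \<longleftrightarrow> (\<exists>a. S = {p. fst p = a})"

definition horizontal_line :: "real \<Rightarrow> (real \<times> real) set" where
  "horizontal_line b = {p. snd p = b}"

definition leftward_ray :: "(real \<times> real) set \<Rightarrow> bool" where
  "leftward_ray S \<longleftrightarrow> (\<exists>a b. S = {(t, b) | t. t \<le> a})"

definition rightward_ray :: "(real \<times> real) set \<Rightarrow> bool" where
  "rightward_ray S \<longleftrightarrow> (\<exists>a b. S = {(t, b) | t. t \<ge> a})"

definition hitting_set :: "(real \<times> real) set set \<Rightarrow> (real \<times> real) set \<Rightarrow> bool" where
  "hitting_set F P \<longleftrightarrow> finite P \<and> (\<forall>S\<in>F. S \<inter> P \<noteq> {})"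

definition min_hitting_set :: "(real \<times> real) set set \<Rightarrow> (real \<times> real) set \<Rightarrow> bool" where
  "min_hitting_set F P \<longleftrightarrow> hitting_set F P \<and> (\<forall>Q. hitting_set F Q \<longrightarrow> card P \<le> card Q)"

definition paired_rays :: "(real \<times> real) set set \<Rightarrow> bool" where
  "paired_rays R \<longleftrightarrow> (\<forall>r\<in>R. leftward_ray r \<or> rightward_ray r) \<and>
     (\<forall>b. (\<exists>r\<in>R. r \<subseteq> horizontal_line b) \<longrightarrow>
        (\<exists>l r. {s\<in>R. s \<subseteq> horizontal_line b} = {l, r} \<and>
               leftward_ray l \<and> rightward_ray r \<and> l \<inter> r \<noteq> {}))"

definition segments :: "(real \<times> real) set set \<Rightarrow> (real \<times> real) set set" where
  "segments R = {l \<inter> r | l r. l \<in> R \<and> r \<in> R \<and> leftward_ray l \<and> rightward_ray r \<and> l \<inter> r \<noteq> {}}"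

definition is_matching :: "(real \<times> real) set set \<Rightarrow> (real \<times> real) set set
    \<Rightarrow> ((real \<times> real) set \<times> (real \<times> real) set) set \<Rightarrow> bool" where
  "is_matching L E M \<longleftrightarrow> M \<subseteq> L \<times> E \<and> (\<forall>(l, e)\<in>M. l \<inter> e \<noteq> {}) \<and>
     inj_on fst M \<and> inj_on snd M"

definition max_matching_size :: "(real \<times> real) set set \<Rightarrow> (real \<times> real) set set \<Rightarrow> nat" where
  "max_matching_size L E = Max (card ` {M. is_matching L E M})"

end

theory Submission
  imports Defs
begin

text \<open>Pick a point of a hitting set P on every line. A segment containing one of these points can be
  matched to that line; a segment both of whose rays contain such points saves a point as well; every
  other segment costs a point of its own. Conversely, any such configuration of a matching N and a set
  Es of doubly hit segments is realised by a hitting set with card L + card E - card N - card Es points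
  in which matched pairs share their crossing point. An exchange argument shows that card N + card Es
  can be maximised with N a maximum matching: an augmenting walk for N costs at most one segment of Es,
  because a line lying between the ends of an alternating walk can be spliced into it.\<close>

lemma successively_mono_tl:
  assumes "successively P xs"
    and "\<And>x y. x \<in> set xs \<Longrightarrow> y \<in> set (tl xs) \<Longrightarrow> P x y \<Longrightarrow> Q x y"
  shows "successively Q xs"
  using assms
proof (induction xs)
  case Nil
  then show ?case by simp
next
  case (Cons x xs)
  show ?case
  proof (cases xs)
    case Nil
    then show ?thesis by simp
  next
    case (Cons y ys)
    have "successively Q xs"
      by (rule "local.Cons.IH") (use "local.Cons.prems" \<open>xs = y # ys\<close> in auto)
    moreover have "Q x y" using "local.Cons.prems" \<open>xs = y # ys\<close> by auto
    ultimately show ?thesis using \<open>xs = y # ys\<close> by simp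
  qed
qed

lemma card_le_Suc_card_Diff_singleton: "card A \<le> Suc (card (A - {x}))"
  by (cases "finite A") (auto simp: card_Diff_singleton_if)

lemma disjoint_mono: "A' \<subseteq> A \<Longrightarrow> B' \<subseteq> B \<Longrightarrow> A \<inter> B = {} \<Longrightarrow> A' \<inter> B' = {}"
  by blast

section \<open>Matchings between points and intervals of the real line\<close>

locale interval_bigraph =
  fixes L :: "'a set" and E :: "'b set" and xc :: "'a \<Rightarrow> real" and lo hi :: "'b \<Rightarrow> real"
  assumes finite_L: "finite L" and finite_E: "finite E"
begin

definition adj :: "'a \<Rightarrow> 'b \<Rightarrow> bool" where
  "adj x e \<longleftrightarrow> lo e \<le> xc x \<and> xc x \<le> hi e"

definition matching :: "('a \<times> 'b) set \<Rightarrow> bool" where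
  "matching N \<longleftrightarrow> N \<subseteq> L \<times> E \<and> (\<forall>p\<in>N. adj (fst p) (snd p)) \<and> inj_on fst N \<and> inj_on snd N"

definition alt_step :: "('a \<times> 'b) set \<Rightarrow> 'a \<Rightarrow> 'a \<Rightarrow> bool" where
  "alt_step N x y \<longleftrightarrow> (\<exists>e. adj x e \<and> (y, e) \<in> N)"

definition augmentable :: "('a \<times> 'b) set \<Rightarrow> 'a \<Rightarrow> 'b \<Rightarrow> bool" where
  "augmentable N z b \<longleftrightarrow>
     (\<exists>N'. matching N' \<and> fst ` N' = insert z (fst ` N) \<and> snd ` N' = insert b (snd ` N))"

lemma finite_matching: "matching N \<Longrightarrow> finite N"
  unfolding matching_def using finite_L finite_E by (meson finite_SigmaI finite_subset)

lemma card_fst_matching: "matching N \<Longrightarrow> card (fst ` N) = card N"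
  unfolding matching_def by (simp add: card_image)

lemma card_augment:
  assumes "matching N" "z \<notin> fst ` N" "matching N'" "fst ` N' = insert z (fst ` N)"
  shows "card N' = Suc (card N)"
  using assms card_fst_matching finite_matching by (metis card_insert_disjoint finite_imageI)

lemma alt_walk_matched:
  "successively (alt_step N) (z # xs) \<Longrightarrow> set xs \<subseteq> fst ` N"
proof (induction xs arbitrary: z)
  case Nil
  then show ?case by simp
next
  case (Cons y ys)
  then have "alt_step N z y" "successively (alt_step N) (y # ys)" by auto
  then show ?case using Cons.IH by (force simp: alt_step_def)
qed

lemma matching_shift:
  assumes N: "matching N" and z: "z \<in> L" "z \<notin> fst ` N" and ze: "adj z e" and ye: "(y, e) \<in> N"
  defines "N1 \<equiv> insert (z, e) (N - {(y, e)})"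
  shows "matching N1" "fst ` N1 = insert z (fst ` N - {y})" "snd ` N1 = snd ` N"
proof -
  have inj: "inj_on fst N" "inj_on snd N" and NLE: "N \<subseteq> L \<times> E"
    using N by (auto simp: matching_def)
  have fst_diff: "fst ` (N - {(y, e)}) = fst ` N - {y}"
    using inj_on_image_set_diff[OF inj(1), of N "{(y, e)}"] ye by simp
  have snd_diff: "snd ` (N - {(y, e)}) = snd ` N - {e}"
    using inj_on_image_set_diff[OF inj(2), of N "{(y, e)}"] ye by simp
  show "fst ` N1 = insert z (fst ` N - {y})" unfolding N1_def using fst_diff by simp
  show "snd ` N1 = snd ` N" unfolding N1_def using snd_diff ye by force
  show "matching N1"
    unfolding matching_def
  proof (intro conjI)
    show "N1 \<subseteq> L \<times> E" unfolding N1_def using NLE ye z by auto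
    show "\<forall>p\<in>N1. adj (fst p) (snd p)" unfolding N1_def using N ze by (auto simp: matching_def)
    show "inj_on fst N1" unfolding N1_def using fst_diff z inj by (auto intro: inj_on_diff)
    show "inj_on snd N1" unfolding N1_def using snd_diff inj by (auto intro: inj_on_diff)
  qed
qed

lemma augmentable_if_alt_walk:
  assumes "matching N" "z \<in> L" "z \<notin> fst ` N" "successively (alt_step N) (z # xs)"
    "distinct (z # xs)" "adj (last (z # xs)) b" "b \<in> E" "b \<notin> snd ` N"
  shows "augmentable N z b"
  using assms
proof (induction xs arbitrary: N z)
  case Nil
  have "matching (insert (z, b) N)" using Nil unfolding matching_def by force
  then show ?case unfolding augmentable_def by (intro exI[of _ "insert (z, b) N"]) auto
next
  case (Cons y ys)
  from Cons.prems(4) have walk: "successively (alt_step N) (y # ys)"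
    and "alt_step N z y" by auto
  then obtain e where ze: "adj z e" and ye: "(y, e) \<in> N" by (auto simp: alt_step_def)
  define N1 where "N1 = insert (z, e) (N - {(y, e)})"
  note N1 = matching_shift[OF Cons.prems(1-3) ze ye, folded N1_def]
  have fresh: "y \<noteq> z" "y \<notin> set ys" using Cons.prems(5) by auto
  have "y \<in> L" using ye Cons.prems(1) by (auto simp: matching_def)
  moreover have "y \<notin> fst ` N1" using N1(2) fresh by auto
  moreover have "successively (alt_step N1) (y # ys)"
  proof (rule successively_mono_tl[OF walk])
    fix a c assume "c \<in> set (tl (y # ys))" "alt_step N a c"
    then show "alt_step N1 a c" using fresh by (auto simp: alt_step_def N1_def)
  qed
  ultimately have "augmentable N1 y b"
    using Cons.IH[OF N1(1)] Cons.prems(5-8) N1(3) by simp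
  moreover have "insert y (fst ` N1) = insert z (fst ` N)" using N1(2) ye by force
  ultimately show ?case using N1(3) by (simp add: augmentable_def)
qed

text \<open>A line whose coordinate lies between the start of an alternating walk and its final segment
  can be spliced into the walk: its coordinate lies between two consecutive vertices of the walk.\<close>
lemma alt_walk_reroute:
  assumes "matching N" "successively (alt_step N) (z # xs)" "adj (last (z # xs)) b"
    "min (xc z) (lo b) \<le> xc u" "xc u \<le> max (xc z) (hi b)"
  shows "\<exists>k. successively (alt_step N) (u # drop k xs) \<and> adj (last (u # drop k xs)) b"
  using assms(2-)
proof (induction xs arbitrary: z)
  case Nil
  then have "adj u b" by (auto simp: adj_def)
  then show ?case by (intro exI[of _ 0]) auto
next
  case (Cons y ys)
  from Cons.prems(1) have walk: "successively (alt_step N) (y # ys)" and "alt_step N z y" by auto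
  then obtain e where ze: "adj z e" and ye: "(y, e) \<in> N" by (auto simp: alt_step_def)
  have "adj y e" using assms(1) ye by (auto simp: matching_def)
  show ?case
  proof (cases "min (xc z) (xc y) \<le> xc u \<and> xc u \<le> max (xc z) (xc y)")
    case True
    then have "adj u e" using ze \<open>adj y e\<close> by (auto simp: adj_def)
    then have "alt_step N u y" using ye by (auto simp: alt_step_def)
    then show ?thesis using walk Cons.prems(2) by (intro exI[of _ 0]) auto
  next
    case False
    then have "min (xc y) (lo b) \<le> xc u" "xc u \<le> max (xc y) (hi b)"
      using Cons.prems(3,4) by auto
    then obtain k where "successively (alt_step N) (u # drop k ys)" "adj (last (u # drop k ys)) b"
      using Cons.IH[OF walk] Cons.prems(2) by auto
    then show ?thesis by (intro exI[of _ "Suc k"]) auto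
  qed
qed

lemma augmentable_between:
  assumes "matching N" "successively (alt_step N) (z # xs)" "distinct (z # xs)"
    "adj (last (z # xs)) b" "b \<in> E" "b \<notin> snd ` N"
    "u \<in> L" "u \<notin> fst ` N" "min (xc z) (lo b) \<le> xc u" "xc u \<le> max (xc z) (hi b)"
  shows "augmentable N u b"
proof -
  obtain k where k: "successively (alt_step N) (u # drop k xs)" "adj (last (u # drop k xs)) b"
    using alt_walk_reroute[OF assms(1,2,4,9,10)] by blast
  have "distinct (u # drop k xs)"
    using alt_walk_matched[OF k(1)] assms(3,8) by (auto dest: distinct_drop[of _ k])
  then show ?thesis using augmentable_if_alt_walk[OF assms(1,7,8) k(1) _ k(2) assms(5,6)] by blast
qed

lemma card_matching_le_cover:
  assumes M: "matching M" and cover: "\<forall>p\<in>M. fst p \<in> C1 \<or> snd p \<in> C2"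
    and "finite C1" "finite C2"
  shows "card M \<le> card C1 + card C2"
proof -
  have inj: "inj_on fst M" "inj_on snd M" and "finite M"
    using M finite_matching by (auto simp: matching_def)
  have "card {p\<in>M. fst p \<in> C1} \<le> card C1"
    by (rule card_inj_on_le[where f = fst]) (use inj assms in \<open>auto intro: inj_on_subset\<close>)
  moreover have "card {p\<in>M. snd p \<in> C2} \<le> card C2"
    by (rule card_inj_on_le[where f = snd]) (use inj assms in \<open>auto intro: inj_on_subset\<close>)
  moreover have "card M \<le> card ({p\<in>M. fst p \<in> C1} \<union> {p\<in>M. snd p \<in> C2})"
    by (rule card_mono) (use \<open>finite M\<close> cover in auto)
  ultimately show ?thesis using card_Un_le[of "{p\<in>M. fst p \<in> C1}" "{p\<in>M. snd p \<in> C2}"] by linarith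
qed

definition alt_reachable :: "('a \<times> 'b) set \<Rightarrow> 'a set" where
  "alt_reachable N = {last (z # xs) | z xs. z \<in> L \<and> z \<notin> fst ` N \<and>
     successively (alt_step N) (z # xs) \<and> distinct (z # xs)}"

lemma alt_reachable_free: "L - fst ` N \<subseteq> alt_reachable N"
  unfolding alt_reachable_def by (force intro: exI[of _ "[]"])

lemma alt_reachable_step:
  assumes x: "x \<in> alt_reachable N" and step: "alt_step N x y"
  shows "y \<in> alt_reachable N"
proof -
  obtain z xs where walk: "x = last (z # xs)" "z \<in> L" "z \<notin> fst ` N"
      "successively (alt_step N) (z # xs)" "distinct (z # xs)"
    using x unfolding alt_reachable_def by blast
  show ?thesis
  proof (cases "y \<in> set xs")
    case True
    then obtain as cs where xs: "xs = as @ y # cs" by (meson split_list)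
    have "successively (alt_step N) ((z # as @ [y]) @ cs)" using walk(4) xs by simp
    then have "successively (alt_step N) (z # as @ [y])" by (simp only: successively_append_iff)
    moreover have "distinct (z # as @ [y])" using walk(5) xs by auto
    ultimately show ?thesis unfolding alt_reachable_def using walk(2,3)
      by (intro CollectI exI[of _ z] exI[of _ "as @ [y]"]) auto
  next
    case False
    have "y \<in> fst ` N" using step by (force simp: alt_step_def)
    then have "distinct (z # xs @ [y])" using False walk(3,5) by auto
    moreover have "successively (alt_step N) ((z # xs) @ [y])"
      unfolding successively_append_iff using walk(1,4) step by auto
    ultimately show ?thesis unfolding alt_reachable_def using walk(2,3)
      by (intro CollectI exI[of _ z] exI[of _ "xs @ [y]"]) auto
  qed
qed

text \<open>Berge's augmenting path argument. If no alternating walk from a free line ends next to a free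
  segment, then the lines outside the set A reached by such walks, together with the segments
  adjacent to A, cover every edge of M, and the edges of N count them injectively.\<close>
lemma augmenting_walk_exists:
  assumes N: "matching N" and M: "matching M" and less: "card N < card M"
  shows "\<exists>z xs b. z \<in> L \<and> z \<notin> fst ` N \<and> successively (alt_step N) (z # xs) \<and>
      distinct (z # xs) \<and> b \<in> E \<and> b \<notin> snd ` N \<and> adj (last (z # xs)) b"
proof (rule ccontr)
  assume no_walk: "\<not> ?thesis"
  define A where "A = alt_reachable N"
  define B where "B = {e \<in> E. \<exists>x\<in>A. adj x e}"
  have B_matched: "B \<subseteq> snd ` N" using no_walk unfolding B_def A_def alt_reachable_def by blast
  have "finite N" using N finite_matching by blast
  have "card M \<le> card (L - A) + card B"
    by (rule card_matching_le_cover[OF M])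
      (use M finite_L finite_E in \<open>auto simp: matching_def B_def\<close>)
  also have "card (L - A) \<le> card {p\<in>N. fst p \<notin> A}"
  proof -
    have "L - A \<subseteq> fst ` {p\<in>N. fst p \<notin> A}" using alt_reachable_free[of N] unfolding A_def by force
    then have "card (L - A) \<le> card (fst ` {p\<in>N. fst p \<notin> A})"
      using \<open>finite N\<close> by (intro card_mono) auto
    also have "\<dots> \<le> card {p\<in>N. fst p \<notin> A}" using \<open>finite N\<close> by (intro card_image_le) auto
    finally show ?thesis .
  qed
  also have "card B \<le> card {p\<in>N. fst p \<in> A}"
  proof -
    have "B \<subseteq> snd ` {p\<in>N. fst p \<in> A}"
    proof
      fix e assume "e \<in> B"
      then obtain x p where "x \<in> A" "adj x e" "p \<in> N" "snd p = e"
        using B_matched unfolding B_def by blast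
      then have "alt_step N x (fst p)" by (force simp: alt_step_def)
      then have "fst p \<in> A" using \<open>x \<in> A\<close> alt_reachable_step unfolding A_def by blast
      then show "e \<in> snd ` {p\<in>N. fst p \<in> A}" using \<open>p \<in> N\<close> \<open>snd p = e\<close> by blast
    qed
    then have "card B \<le> card (snd ` {p\<in>N. fst p \<in> A})"
      using \<open>finite N\<close> by (intro card_mono) auto
    also have "\<dots> \<le> card {p\<in>N. fst p \<in> A}" using \<open>finite N\<close> by (intro card_image_le) auto
    finally show ?thesis .
  qed
  also have "card {p\<in>N. fst p \<notin> A} + card {p\<in>N. fst p \<in> A} =
      card ({p\<in>N. fst p \<notin> A} \<union> {p\<in>N. fst p \<in> A})"
    using \<open>finite N\<close> by (intro card_Un_disjoint[symmetric]) auto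
  also have "\<dots> = card N" by (rule arg_cong[where f = card]) blast
  finally show False using less by simp
qed

text \<open>The trace of a hitting set: each pair of N shares the crossing point of its line and segment,
  and each segment e of Es has its left ray hit on the line lw e and its right ray on the line rw e.
  As all these lines are distinct, card L + card E - card N - card Es points suffice.\<close>
definition config :: "('a \<times> 'b) set \<Rightarrow> 'b set \<Rightarrow> ('b \<Rightarrow> 'a) \<Rightarrow> ('b \<Rightarrow> 'a) \<Rightarrow> bool" where
  "config N Es lw rw \<longleftrightarrow> matching N \<and> Es \<subseteq> E \<and> lw ` Es \<subseteq> L \<and> rw ` Es \<subseteq> L \<and>
     inj_on lw Es \<and> inj_on rw Es \<and> lw ` Es \<inter> rw ` Es = {} \<and>
     fst ` N \<inter> lw ` Es = {} \<and> fst ` N \<inter> rw ` Es = {} \<and> snd ` N \<inter> Es = {} \<and>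
     (\<forall>e\<in>Es. xc (lw e) \<le> hi e \<and> lo e \<le> xc (rw e))"

lemma config_relabel_left:
  assumes V: "config N Es lw rw" and sub: "Es' \<subseteq> Es" "lw' ` Es' \<subseteq> lw ` Es"
    and inj: "inj_on lw' Es'" and bound: "\<forall>e\<in>Es'. xc (lw' e) \<le> hi e"
  shows "config N Es' lw' rw"
proof -
  have rw_sub: "rw ` Es' \<subseteq> rw ` Es" using sub(1) by (rule image_mono)
  have v: "matching N" "Es \<subseteq> E" "lw ` Es \<subseteq> L" "rw ` Es \<subseteq> L" "inj_on rw Es"
    "lw ` Es \<inter> rw ` Es = {}" "fst ` N \<inter> lw ` Es = {}" "fst ` N \<inter> rw ` Es = {}"
    "snd ` N \<inter> Es = {}" "\<forall>e\<in>Es. lo e \<le> xc (rw e)"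
    using V unfolding config_def by simp_all
  have "Es' \<subseteq> E" "lw' ` Es' \<subseteq> L" "rw ` Es' \<subseteq> L"
    using sub(1) v(2) sub(2) v(3) rw_sub v(4) by auto
  moreover have "inj_on rw Es'" using v(5) sub(1) by (rule inj_on_subset)
  moreover have "lw' ` Es' \<inter> rw ` Es' = {}" using disjoint_mono[OF sub(2) rw_sub v(6)] .
  moreover have "fst ` N \<inter> lw' ` Es' = {}" using disjoint_mono[OF order_refl sub(2) v(7)] .
  moreover have "fst ` N \<inter> rw ` Es' = {}" using disjoint_mono[OF order_refl rw_sub v(8)] .
  moreover have "snd ` N \<inter> Es' = {}" using disjoint_mono[OF order_refl sub(1) v(9)] .
  moreover have "\<forall>e\<in>Es'. xc (lw' e) \<le> hi e \<and> lo e \<le> xc (rw e)"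
    using v(10) sub(1) bound by blast
  ultimately show ?thesis using v(1) inj by (simp add: config_def)
qed

lemma config_subset:
  assumes V: "config N Es lw rw" and sub: "Es' \<subseteq> Es"
  shows "config N Es' lw rw"
proof (rule config_relabel_left[OF V sub])
  have "inj_on lw Es" "\<forall>e\<in>Es. xc (lw e) \<le> hi e" using V by (simp_all add: config_def)
  then show "inj_on lw Es'" "\<forall>e\<in>Es'. xc (lw e) \<le> hi e"
    using sub by (blast intro: inj_on_subset)+
qed (use sub in blast)

lemma config_augment:
  assumes V: "config N Es lw rw" and aug: "augmentable N z b"
    and fresh: "z \<notin> fst ` N" "z \<notin> lw ` Es" "z \<notin> rw ` Es" "b \<notin> Es"
  shows "\<exists>N'. config N' Es lw rw \<and> card N' = Suc (card N)"
proof -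
  obtain N' where N': "matching N'" "fst ` N' = insert z (fst ` N)" "snd ` N' = insert b (snd ` N)"
    using aug by (auto simp: augmentable_def)
  have "config N' Es lw rw" using V N' fresh by (simp add: config_def)
  moreover have "card N' = Suc (card N)"
    using card_augment[OF _ fresh(1) N'(1,2)] V by (simp add: config_def)
  ultimately show ?thesis by blast
qed

text \<open>The exchange step when the new matched line z is the left line of a segment D of Es. If the
  new matched segment b also lies in Es, either D can take over the left line of b, or that left
  line lies between z and b and can start the augmenting walk instead of z.\<close>
lemma exchange_left:
  assumes V: "config N Es lw rw"
    and walk: "successively (alt_step N) (z # xs)" "distinct (z # xs)"
      "adj (last (z # xs)) b" "b \<in> E" "b \<notin> snd ` N"
    and D: "D \<in> Es" "z = lw D"
  shows "\<exists>N' Es' lw' rw'. config N' Es' lw' rw' \<and> card N' = Suc (card N) \<and> card Es \<le> Suc (card Es')"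
proof -
  have N: "matching N" and inj: "inj_on lw Es" and disj: "lw ` Es \<inter> rw ` Es = {}"
    and unmatched: "fst ` N \<inter> lw ` Es = {}" and lines: "lw ` Es \<subseteq> L"
    and bounds: "\<forall>e\<in>Es. xc (lw e) \<le> hi e \<and> lo e \<le> xc (rw e)"
    using V by (auto simp: config_def)
  have z: "z \<in> L" "z \<notin> fst ` N" using D lines unmatched by auto
  note drop_one = card_le_Suc_card_Diff_singleton[of Es]
  have aug_z: "augmentable N z b" using augmentable_if_alt_walk[OF N z walk(1-5)] .
  consider (free) "b \<notin> Es \<or> b = D" | (swap) "b \<in> Es" "b \<noteq> D" "xc (lw b) \<le> hi D"
    | (reroute) "b \<in> Es" "b \<noteq> D" "hi D < xc (lw b)"
    by (meson not_le)
  then show ?thesis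
  proof cases
    case free
    have "config N (Es - {D}) lw rw" using config_subset[OF V] by blast
    moreover have "z \<notin> lw ` (Es - {D})" "z \<notin> rw ` (Es - {D})" "b \<notin> Es - {D}"
      using D inj disj free by (auto simp: inj_on_def)
    ultimately show ?thesis using config_augment[OF _ aug_z z(2)] drop_one by blast
  next
    case swap
    define lw' where "lw' = lw(D := lw b)"
    have "config N (Es - {b}) lw' rw"
    proof (rule config_relabel_left[OF V])
      show "lw' ` (Es - {b}) \<subseteq> lw ` Es" using swap unfolding lw'_def by auto
      show "inj_on lw' (Es - {b})" using inj swap D unfolding lw'_def inj_on_def by auto
      show "\<forall>e\<in>Es - {b}. xc (lw' e) \<le> hi e" using bounds swap unfolding lw'_def by auto
    qed auto
    moreover have "z \<notin> lw' ` (Es - {b})" "z \<notin> rw ` (Es - {b})" "b \<notin> Es - {b}"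
      using D swap inj disj unfolding lw'_def inj_on_def by auto
    ultimately show ?thesis using config_augment[OF _ aug_z z(2)] drop_one by blast
  next
    case reroute
    define u where "u = lw b"
    have u: "u \<in> L" "u \<notin> fst ` N" using reroute lines unmatched unfolding u_def by auto
    have "min (xc z) (lo b) \<le> xc u" "xc u \<le> max (xc z) (hi b)"
      using reroute bounds D unfolding u_def by fastforce+
    then have aug_u: "augmentable N u b" using augmentable_between[OF N walk u] by blast
    have "config N (Es - {b}) lw rw" using config_subset[OF V] by blast
    moreover have "u \<notin> lw ` (Es - {b})" "u \<notin> rw ` (Es - {b})" "b \<notin> Es - {b}"
      using reroute inj disj unfolding u_def inj_on_def by auto
    ultimately show ?thesis using config_augment[OF _ aug_u u(2)] drop_one by blast
  qed
qed

lemma exchange: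
  assumes V: "config N Es lw rw" and M: "matching M" and less: "card N < card M"
  shows "\<exists>N' Es' lw' rw'. config N' Es' lw' rw' \<and> card N' = Suc (card N) \<and> card Es \<le> Suc (card Es')"
proof -
  have N: "matching N" using V by (simp add: config_def)
  obtain z xs b where z: "z \<in> L" "z \<notin> fst ` N" and walk: "successively (alt_step N) (z # xs)"
      "distinct (z # xs)" "adj (last (z # xs)) b" "b \<in> E" "b \<notin> snd ` N"
    using augmenting_walk_exists[OF N M less] by blast
  consider (left) "z \<in> lw ` Es" | (right) "z \<in> rw ` Es" | (unused) "z \<notin> lw ` Es" "z \<notin> rw ` Es"
    by blast
  then show ?thesis
  proof cases
    case left
    then show ?thesis using exchange_left[OF V walk] by blast
  next
    case right
    then obtain D where D: "D \<in> Es" "z = rw D" by blast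
    txt \<open>Reflect the picture in a vertical line: this swaps the roles of lw and rw.\<close>
    interpret mirror: interval_bigraph L E "\<lambda>x. - xc x" "\<lambda>e. - hi e" "\<lambda>e. - lo e"
      by unfold_locales (rule finite_L finite_E)+
    have adj: "mirror.adj = adj" by (auto simp: fun_eq_iff mirror.adj_def adj_def)
    then have step: "mirror.alt_step = alt_step" and matching: "mirror.matching = matching"
      by (simp_all add: fun_eq_iff mirror.alt_step_def alt_step_def mirror.matching_def matching_def)
    have config: "mirror.config N' Es' lw' rw' \<longleftrightarrow> config N' Es' rw' lw'" for N' Es' lw' rw'
      unfolding mirror.config_def config_def matching by (simp add: Int_commute conj_ac)
    have "mirror.config N Es rw lw" using V by (simp add: config)
    from mirror.exchange_left[OF this, unfolded step adj, OF walk D]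
    obtain N' Es' lw' rw' where "config N' Es' rw' lw'" "card N' = Suc (card N)" "card Es \<le> Suc (card Es')"
      unfolding config by blast
    then show ?thesis by blast
  next
    case unused
    have "config N (Es - {b}) lw rw" using config_subset[OF V] by blast
    moreover have "augmentable N z b" using augmentable_if_alt_walk[OF N z walk] .
    ultimately obtain N' where "config N' (Es - {b}) lw rw" "card N' = Suc (card N)"
      using config_augment[OF _ _ z(2)] unused by blast
    then show ?thesis using card_le_Suc_card_Diff_singleton[of Es b] by blast
  qed
qed

lemma config_with_large_matching:
  assumes "config N Es lw rw" "matching M"
  shows "\<exists>N' Es' lw' rw'. config N' Es' lw' rw' \<and> card M \<le> card N' \<and>
    card N + card Es \<le> card N' + card Es'"
  using assms
proof (induction "card M - card N" arbitrary: N Es lw rw rule: less_induct)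
  case less
  show ?case
  proof (cases "card M \<le> card N")
    case True
    then show ?thesis using less.prems by blast
  next
    case False
    then obtain N1 Es1 lw1 rw1 where 1: "config N1 Es1 lw1 rw1" "card N1 = Suc (card N)"
        "card Es \<le> Suc (card Es1)"
      using exchange[OF less.prems] by (meson not_le)
    then have "card M - card N1 < card M - card N" using False by simp
    from less.hyps[OF this 1(1) less.prems(2)] 1(2,3) show ?thesis by fastforce
  qed
qed

end

section \<open>Lines, segments and rays in the plane\<close>

type_synonym region = "(real \<times> real) set"

definition line_x :: "region \<Rightarrow> real" where
  "line_x l = (SOME a. l = {p. fst p = a})"

definition hseg :: "real \<Rightarrow> real \<Rightarrow> real \<Rightarrow> region" where
  "hseg a b y = {(t, y) | t. a \<le> t \<and> t \<le> b}"

text \<open>(left end, right end, height) of a horizontal segment; unspecified for other sets.\<close>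
definition hseg_params :: "region \<Rightarrow> real \<times> real \<times> real" where
  "hseg_params e = (SOME q. fst q \<le> fst (snd q) \<and> e = hseg (fst q) (fst (snd q)) (snd (snd q)))"

definition seg_lo :: "region \<Rightarrow> real" where "seg_lo e = fst (hseg_params e)"
definition seg_hi :: "region \<Rightarrow> real" where "seg_hi e = fst (snd (hseg_params e))"
definition seg_y :: "region \<Rightarrow> real" where "seg_y e = snd (snd (hseg_params e))"

definition left_ray_of :: "region \<Rightarrow> region" where
  "left_ray_of e = {(t, seg_y e) | t. t \<le> seg_hi e}"

definition right_ray_of :: "region \<Rightarrow> region" where
  "right_ray_of e = {(t, seg_y e) | t. seg_lo e \<le> t}"

lemma hseg_eq_hseg_iff:
  assumes "a \<le> b" "a' \<le> b'"
  shows "hseg a b y = hseg a' b' y' \<longleftrightarrow> a = a' \<and> b = b' \<and> y = y'"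
proof
  assume eq: "hseg a b y = hseg a' b' y'"
  have "(a, y) \<in> hseg a' b' y'" "(b, y) \<in> hseg a' b' y'"
    "(a', y') \<in> hseg a b y" "(b', y') \<in> hseg a b y"
    using assms eq by (auto simp: hseg_def)
  then show "a = a' \<and> b = b' \<and> y = y'" by (auto simp: hseg_def)
qed simp

lemma hseg_params:
  assumes "a \<le> b"
  shows "seg_lo (hseg a b y) = a" "seg_hi (hseg a b y) = b" "seg_y (hseg a b y) = y"
proof -
  let ?P = "\<lambda>q. fst q \<le> fst (snd q) \<and> hseg a b y = hseg (fst q) (fst (snd q)) (snd (snd q))"
  have "?P (a, b, y)" using assms by simp
  then have "?P (hseg_params (hseg a b y))" unfolding hseg_params_def by (rule someI)
  then have "hseg_params (hseg a b y) = (a, b, y)"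
    using hseg_eq_hseg_iff[OF assms] by (metis prod.collapse)
  then show "seg_lo (hseg a b y) = a" "seg_hi (hseg a b y) = b" "seg_y (hseg a b y) = y"
    by (simp_all add: seg_lo_def seg_hi_def seg_y_def)
qed

lemma not_leftward_and_rightward: "leftward_ray S \<Longrightarrow> \<not> rightward_ray S"
proof
  assume "leftward_ray S" "rightward_ray S"
  then obtain a b a' b' where S: "S = {(t, b) | t. t \<le> a}" "S = {(t, b') | t. t \<ge> a'}"
    unfolding leftward_ray_def rightward_ray_def by blast
  have "(min a a' - 1, b) \<in> S" using S(1) by auto
  then show False using S(2) by auto
qed

lemma leftward_rightward_inter:
  assumes "leftward_ray l" "rightward_ray r" "l \<inter> r \<noteq> {}"
  defines "e \<equiv> l \<inter> r"
  shows "seg_lo e \<le> seg_hi e" "e = hseg (seg_lo e) (seg_hi e) (seg_y e)"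
    "left_ray_of e = l" "right_ray_of e = r"
proof -
  obtain a b where l: "l = {(t, b) | t. t \<le> a}" using assms(1) unfolding leftward_ray_def by blast
  obtain a' b' where r: "r = {(t, b') | t. t \<ge> a'}" using assms(2) unfolding rightward_ray_def by blast
  from assms(3) obtain p where "p \<in> l" "p \<in> r" by blast
  then have "b' = b" and "a' \<le> a" using l r by auto
  moreover have e: "e = hseg a' a b" unfolding e_def l r hseg_def using \<open>b' = b\<close> by auto
  ultimately have params: "seg_lo e = a'" "seg_hi e = a" "seg_y e = b"
    using hseg_params by simp_all
  show "seg_lo e \<le> seg_hi e" "e = hseg (seg_lo e) (seg_hi e) (seg_y e)"
    using params e \<open>a' \<le> a\<close> by simp_all
  show "left_ray_of e = l" unfolding left_ray_of_def params l by simp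
  show "right_ray_of e = r" unfolding right_ray_of_def params r \<open>b' = b\<close> by auto
qed

lemma mem_hseg_iff: "p \<in> hseg a b y \<longleftrightarrow> snd p = y \<and> a \<le> fst p \<and> fst p \<le> b"
  by (cases p) (auto simp: hseg_def)

lemma mem_left_ray_of_iff: "p \<in> left_ray_of e \<longleftrightarrow> snd p = seg_y e \<and> fst p \<le> seg_hi e"
  by (cases p) (auto simp: left_ray_of_def)

lemma mem_right_ray_of_iff: "p \<in> right_ray_of e \<longleftrightarrow> snd p = seg_y e \<and> seg_lo e \<le> fst p"
  by (cases p) (auto simp: right_ray_of_def)

lemma segments_cases:
  assumes "e \<in> segments R"
  obtains l r where "e = l \<inter> r" "l \<in> R" "r \<in> R" "leftward_ray l" "rightward_ray r" "l \<inter> r \<noteq> {}"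
  using assms unfolding segments_def by blast

lemma segment_rays:
  assumes "e \<in> segments R"
  shows "left_ray_of e \<in> R" "right_ray_of e \<in> R" "leftward_ray (left_ray_of e)"
    "rightward_ray (right_ray_of e)" "e = left_ray_of e \<inter> right_ray_of e" "seg_lo e \<le> seg_hi e"
proof -
  obtain l r where "e = l \<inter> r" "l \<in> R" "r \<in> R" "leftward_ray l" "rightward_ray r" "l \<inter> r \<noteq> {}"
    using assms by (rule segments_cases)
  then show "left_ray_of e \<in> R" "right_ray_of e \<in> R" "leftward_ray (left_ray_of e)"
    "rightward_ray (right_ray_of e)" "e = left_ray_of e \<inter> right_ray_of e" "seg_lo e \<le> seg_hi e"
    using leftward_rightward_inter[of l r] by simp_all
qed

lemma rays_of_horizontal:
  "left_ray_of e \<subseteq> horizontal_line (seg_y e)" "right_ray_of e \<subseteq> horizontal_line (seg_y e)"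
  by (auto simp: left_ray_of_def right_ray_of_def horizontal_line_def)

lemma ray_horizontal:
  assumes "leftward_ray r \<or> rightward_ray r"
  obtains b where "r \<subseteq> horizontal_line b"
proof -
  from assms obtain a b where "r = {(t, b) | t. t \<le> a} \<or> r = {(t, b) | t. t \<ge> a}"
    unfolding leftward_ray_def rightward_ray_def by blast
  then have "r \<subseteq> horizontal_line b" unfolding horizontal_line_def by auto
  then show thesis by (rule that)
qed

lemma mem_segment_iff:
  assumes "e \<in> segments R"
  shows "p \<in> e \<longleftrightarrow> snd p = seg_y e \<and> seg_lo e \<le> fst p \<and> fst p \<le> seg_hi e"
proof -
  obtain l r where "e = l \<inter> r" "leftward_ray l" "rightward_ray r" "l \<inter> r \<noteq> {}"
    using assms by (rule segments_cases)
  then have "e = hseg (seg_lo e) (seg_hi e) (seg_y e)" using leftward_rightward_inter(2) by blast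
  then show ?thesis by (metis mem_hseg_iff)
qed

section \<open>Hitting vertical lines and paired rays\<close>

lemma min_hitting_set_exists:
  assumes "hitting_set F H"
  shows "\<exists>P. min_hitting_set F P"
  using ex_has_least_nat[of "hitting_set F" H card] assms unfolding min_hitting_set_def by blast

lemma max_matching_size_attained:
  assumes "finite L" "finite E"
  shows "\<exists>M. is_matching L E M \<and> card M = max_matching_size L E"
proof -
  have "{M. is_matching L E M} \<subseteq> Pow (L \<times> E)" unfolding is_matching_def by auto
  then have "finite (card ` {M. is_matching L E M})"
    using assms by (meson finite_Pow_iff finite_SigmaI finite_imageI finite_subset)
  moreover have "is_matching L E {}" by (simp add: is_matching_def)
  ultimately have "max_matching_size L E \<in> card ` {M. is_matching L E M}"
    unfolding max_matching_size_def by (intro Max_in) auto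
  then show ?thesis by auto
qed

locale lines_and_rays =
  fixes L R :: "region set"
  assumes finite_L: "finite L" and vertical: "\<forall>l\<in>L. vertical_line l"
    and finite_R: "finite R" and paired: "paired_rays R"
begin

lemma line_eq: "l \<in> L \<Longrightarrow> l = {p. fst p = line_x l}"
  unfolding line_x_def using vertical by (metis (mono_tags) someI_ex vertical_line_def)

lemma mem_line_iff: "l \<in> L \<Longrightarrow> p \<in> l \<longleftrightarrow> fst p = line_x l"
  using line_eq by blast

lemma line_x_inj: "inj_on line_x L"
  by (rule inj_onI) (metis line_eq)

lemma finite_segments: "finite (segments R)"
proof -
  have "segments R \<subseteq> (\<lambda>(l, r). l \<inter> r) ` (R \<times> R)" unfolding segments_def by auto
  then show ?thesis using finite_R finite_subset by blast
qed

lemma ray_of_segment: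
  assumes "r \<in> R"
  obtains e where "e \<in> segments R" "r = left_ray_of e \<or> r = right_ray_of e"
proof -
  obtain b where r: "r \<subseteq> horizontal_line b"
    using paired assms ray_horizontal unfolding paired_rays_def by blast
  then obtain l0 r0 where pair: "{s\<in>R. s \<subseteq> horizontal_line b} = {l0, r0}" "leftward_ray l0"
      "rightward_ray r0" "l0 \<inter> r0 \<noteq> {}"
    using paired assms unfolding paired_rays_def by blast
  have "r \<in> {l0, r0}" using pair(1) r assms by blast
  then have "r = left_ray_of (l0 \<inter> r0) \<or> r = right_ray_of (l0 \<inter> r0)"
    using leftward_rightward_inter(3,4)[OF pair(2-4)] by auto
  moreover have "l0 \<inter> r0 \<in> segments R" using pair unfolding segments_def by blast
  ultimately show ?thesis using that by blast
qed

lemma ray_unique_on_line: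
  assumes "r \<in> R" "r' \<in> R" "r \<subseteq> horizontal_line b" "r' \<subseteq> horizontal_line b"
    and "leftward_ray r \<longleftrightarrow> leftward_ray r'"
  shows "r = r'"
proof -
  obtain l0 r0 where pair: "{s\<in>R. s \<subseteq> horizontal_line b} = {l0, r0}" "leftward_ray l0"
      "rightward_ray r0"
    using paired assms(1,3) unfolding paired_rays_def by blast
  have on_line: "r \<in> {l0, r0}" "r' \<in> {l0, r0}" using assms(1-4) pair(1) by blast+
  have "\<not> leftward_ray r0" using pair(3) not_leftward_and_rightward by blast
  then have "r = l0 \<longleftrightarrow> leftward_ray r" "r' = l0 \<longleftrightarrow> leftward_ray r'"
    using on_line pair(2) by auto
  then show ?thesis using on_line assms(5) by auto
qed

lemma segment_eqI:
  assumes "e \<in> segments R" "e' \<in> segments R" "seg_y e = seg_y e'"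
  shows "e = e'"
proof -
  note e = segment_rays[OF assms(1)] and e' = segment_rays[OF assms(2)]
  note horizontal = rays_of_horizontal[of e] rays_of_horizontal[of e', folded assms(3)]
  have "left_ray_of e = left_ray_of e'"
    using ray_unique_on_line[OF e(1) e'(1) horizontal(1,3)] e(3) e'(3) by blast
  moreover have "right_ray_of e = right_ray_of e'"
    using ray_unique_on_line[OF e(2) e'(2) horizontal(2,4)] e(4) e'(4)
      not_leftward_and_rightward by blast
  ultimately show ?thesis using e(5) e'(5) by simp
qed

lemma meets_segment_iff:
  assumes "l \<in> L" "e \<in> segments R"
  shows "l \<inter> e \<noteq> {} \<longleftrightarrow> seg_lo e \<le> line_x l \<and> line_x l \<le> seg_hi e"
proof
  assume "l \<inter> e \<noteq> {}"
  then show "seg_lo e \<le> line_x l \<and> line_x l \<le> seg_hi e"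
    using mem_line_iff[OF assms(1)] mem_segment_iff[OF assms(2)] by auto
next
  assume "seg_lo e \<le> line_x l \<and> line_x l \<le> seg_hi e"
  then have "(line_x l, seg_y e) \<in> l \<inter> e"
    using mem_line_iff[OF assms(1)] mem_segment_iff[OF assms(2)] by auto
  then show "l \<inter> e \<noteq> {}" by blast
qed

sublocale G: interval_bigraph L "segments R" line_x seg_lo seg_hi
  by unfold_locales (use finite_L finite_segments in auto)

lemma is_matching_iff: "is_matching L (segments R) N \<longleftrightarrow> G.matching N"
proof -
  have "fst p \<inter> snd p \<noteq> {} \<longleftrightarrow> G.adj (fst p) (snd p)" if "p \<in> L \<times> segments R" for p
    using that meets_segment_iff unfolding G.adj_def by (simp add: mem_Times_iff)
  then show ?thesis unfolding is_matching_def G.matching_def split_def by blast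
qed

definition config_points ::
  "(region \<times> region) set \<Rightarrow> region set \<Rightarrow> (region \<Rightarrow> region) \<Rightarrow> (region \<Rightarrow> region) \<Rightarrow> region"
where
  "config_points N Es lw rw =
     (\<lambda>p. (line_x (fst p), seg_y (snd p))) ` N \<union>
     (\<lambda>e. (line_x (lw e), seg_y e)) ` Es \<union> (\<lambda>e. (line_x (rw e), seg_y e)) ` Es \<union>
     (\<lambda>l. (line_x l, 0)) ` (L - (fst ` N \<union> lw ` Es \<union> rw ` Es)) \<union>
     (\<lambda>e. (seg_lo e, seg_y e)) ` (segments R - (snd ` N \<union> Es))"

lemma config_finite:
  assumes "G.config N Es lw rw"
  shows "finite N" "finite Es"
  using assms G.finite_matching finite_segments finite_subset by (auto simp: G.config_def)

lemma card_config_points: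
  assumes V: "G.config N Es lw rw"
  shows "card (config_points N Es lw rw) + card N + card Es \<le> card L + card (segments R)"
proof -
  define UL where "UL = fst ` N \<union> lw ` Es \<union> rw ` Es"
  define UE where "UE = snd ` N \<union> Es"
  have v: "N \<subseteq> L \<times> segments R" "inj_on fst N" "inj_on snd N" "Es \<subseteq> segments R"
    "lw ` Es \<subseteq> L" "rw ` Es \<subseteq> L" "inj_on lw Es" "inj_on rw Es" "lw ` Es \<inter> rw ` Es = {}"
    "fst ` N \<inter> lw ` Es = {}" "fst ` N \<inter> rw ` Es = {}" "snd ` N \<inter> Es = {}"
    using V by (simp_all add: G.config_def G.matching_def)
  note fin = config_finite[OF V]
  have "UL \<subseteq> L" "UE \<subseteq> segments R" unfolding UL_def UE_def using v(1,4-6) by auto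
  have "card UL = card N + card Es + card Es"
    unfolding UL_def using fin v(2,7-11)
    by (simp add: card_Un_disjoint Int_Un_distrib2 card_image)
  moreover have "card (L - UL) = card L - card UL" "card UL \<le> card L"
    using \<open>UL \<subseteq> L\<close> finite_L by (auto intro: card_Diff_subset card_mono finite_subset)
  ultimately have lines: "card (L - UL) + card N + card Es + card Es = card L" by linarith
  have "card UE = card N + card Es"
    unfolding UE_def using fin v(3,12) by (simp add: card_Un_disjoint card_image)
  moreover have "card (segments R - UE) = card (segments R) - card UE" "card UE \<le> card (segments R)"
    using \<open>UE \<subseteq> segments R\<close> finite_segments by (auto intro: card_Diff_subset card_mono finite_subset)
  ultimately have segs: "card (segments R - UE) + card N + card Es = card (segments R)" by linarith
  have "card (config_points N Es lw rw) \<le>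
      card ((\<lambda>p. (line_x (fst p), seg_y (snd p))) ` N) + card ((\<lambda>e. (line_x (lw e), seg_y e)) ` Es) +
      card ((\<lambda>e. (line_x (rw e), seg_y e)) ` Es) + card ((\<lambda>l. (line_x l, 0::real)) ` (L - UL)) +
      card ((\<lambda>e. (seg_lo e, seg_y e)) ` (segments R - UE))"
    unfolding config_points_def UL_def UE_def by (meson add_le_mono card_Un_le le_trans order_refl)
  also have "\<dots> \<le> card N + card Es + card Es + card (L - UL) + card (segments R - UE)"
    by (intro add_mono card_image_le finite_Diff fin finite_L finite_segments)
  finally show ?thesis using lines segs by linarith
qed

lemma config_points_hit_line:
  assumes "l \<in> L"
  shows "l \<inter> config_points N Es lw rw \<noteq> {}"
proof -
  have "\<exists>y. (line_x l, y) \<in> config_points N Es lw rw"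
    using assms by (cases "l \<in> fst ` N \<union> lw ` Es \<union> rw ` Es") (auto simp: config_points_def)
  then obtain y where "(line_x l, y) \<in> config_points N Es lw rw" ..
  moreover have "(line_x l, y) \<in> l" using mem_line_iff[OF assms] by simp
  ultimately show ?thesis by blast
qed

lemma config_points_hit_rays:
  assumes V: "G.config N Es lw rw" and e: "e \<in> segments R"
  shows "left_ray_of e \<inter> config_points N Es lw rw \<noteq> {}"
    "right_ray_of e \<inter> config_points N Es lw rw \<noteq> {}"
proof -
  let ?Q = "config_points N Es lw rw"
  consider (matched) p where "p \<in> N" "e = snd p" | (split) "e \<in> Es"
    | (single) "e \<in> segments R - (snd ` N \<union> Es)"
    using e by blast
  then have "left_ray_of e \<inter> ?Q \<noteq> {} \<and> right_ray_of e \<inter> ?Q \<noteq> {}"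
  proof cases
    case matched
    then have "seg_lo e \<le> line_x (fst p) \<and> line_x (fst p) \<le> seg_hi e"
      using V by (auto simp: G.config_def G.matching_def G.adj_def)
    then have "(line_x (fst p), seg_y e) \<in> left_ray_of e \<inter> right_ray_of e"
      by (simp add: mem_left_ray_of_iff mem_right_ray_of_iff)
    moreover have "(line_x (fst p), seg_y e) \<in> ?Q" using matched unfolding config_points_def by blast
    ultimately show ?thesis by blast
  next
    case split
    then have "(line_x (lw e), seg_y e) \<in> left_ray_of e \<inter> ?Q"
      "(line_x (rw e), seg_y e) \<in> right_ray_of e \<inter> ?Q"
      using V by (auto simp: G.config_def config_points_def mem_left_ray_of_iff mem_right_ray_of_iff)
    then show ?thesis by blast
  next
    case single
    have "(seg_lo e, seg_y e) \<in> left_ray_of e \<inter> right_ray_of e"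
      using segment_rays(6)[OF e] by (simp add: mem_left_ray_of_iff mem_right_ray_of_iff)
    moreover have "(seg_lo e, seg_y e) \<in> ?Q" using single unfolding config_points_def by blast
    ultimately show ?thesis by blast
  qed
  then show "left_ray_of e \<inter> ?Q \<noteq> {}" "right_ray_of e \<inter> ?Q \<noteq> {}" by blast+
qed

lemma config_points_hitting:
  assumes V: "G.config N Es lw rw"
  shows "hitting_set (L \<union> R) (config_points N Es lw rw)"
  unfolding hitting_set_def
proof
  show "finite (config_points N Es lw rw)"
    unfolding config_points_def using config_finite[OF V] finite_L finite_segments by simp
  show "\<forall>S\<in>L \<union> R. S \<inter> config_points N Es lw rw \<noteq> {}"
  proof
    fix S assume "S \<in> L \<union> R"
    then consider "S \<in> L" | e where "e \<in> segments R" "S = left_ray_of e \<or> S = right_ray_of e"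
      using ray_of_segment by blast
    then show "S \<inter> config_points N Es lw rw \<noteq> {}"
      by cases (use config_points_hit_line config_points_hit_rays[OF V] in auto)
  qed
qed

lemma segment_eq_if_rays_meet:
  assumes "e \<in> segments R" "e' \<in> segments R"
    and "p \<in> left_ray_of e \<union> right_ray_of e" "p \<in> left_ray_of e' \<union> right_ray_of e'"
  shows "e = e'"
proof (rule segment_eqI[OF assms(1,2)])
  show "seg_y e = seg_y e'"
    using assms(3,4) by (auto simp: mem_left_ray_of_iff mem_right_ray_of_iff)
qed

context
  fixes P assumes hit: "hitting_set (L \<union> R) P"
begin

definition line_point :: "region \<Rightarrow> real \<times> real" where
  "line_point l = (SOME p. p \<in> P \<and> p \<in> l)"

lemma line_point: "l \<in> L \<Longrightarrow> line_point l \<in> P \<and> line_point l \<in> l"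
proof -
  assume "l \<in> L"
  then have "\<exists>p. p \<in> P \<and> p \<in> l" using hit unfolding hitting_set_def by blast
  then show ?thesis unfolding line_point_def by (rule someI_ex)
qed

lemma fst_line_point: "l \<in> L \<Longrightarrow> fst (line_point l) = line_x l"
  using line_point mem_line_iff by blast

lemma inj_on_line_point: "inj_on line_point L"
proof (rule inj_onI)
  fix l l' assume "l \<in> L" "l' \<in> L" "line_point l = line_point l'"
  then have "line_x l = line_x l'" using fst_line_point by metis
  with line_x_inj show "l = l'" using \<open>l \<in> L\<close> \<open>l' \<in> L\<close> by (rule inj_onD)
qed

definition hit_segments :: "region set" where
  "hit_segments = {e \<in> segments R. \<exists>l\<in>L. line_point l \<in> e}"

definition hitting_line :: "region \<Rightarrow> region" where
  "hitting_line e = (SOME l. l \<in> L \<and> line_point l \<in> e)"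

definition hit_matching :: "(region \<times> region) set" where
  "hit_matching = (\<lambda>e. (hitting_line e, e)) ` hit_segments"

definition split_segments :: "region set" where
  "split_segments = {e \<in> segments R - hit_segments.
     (\<exists>l\<in>L. line_point l \<in> left_ray_of e) \<and> (\<exists>l\<in>L. line_point l \<in> right_ray_of e)}"

definition left_line :: "region \<Rightarrow> region" where
  "left_line e = (SOME l. l \<in> L \<and> line_point l \<in> left_ray_of e)"

definition right_line :: "region \<Rightarrow> region" where
  "right_line e = (SOME l. l \<in> L \<and> line_point l \<in> right_ray_of e)"

lemma hitting_line: "e \<in> hit_segments \<Longrightarrow> hitting_line e \<in> L \<and> line_point (hitting_line e) \<in> e"
  unfolding hit_segments_def hitting_line_def by (rule someI_ex) blast

lemma left_line:
  "e \<in> split_segments \<Longrightarrow> left_line e \<in> L \<and> line_point (left_line e) \<in> left_ray_of e"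
  unfolding split_segments_def left_line_def by (rule someI_ex) blast

lemma right_line:
  "e \<in> split_segments \<Longrightarrow> right_line e \<in> L \<and> line_point (right_line e) \<in> right_ray_of e"
  unfolding split_segments_def right_line_def by (rule someI_ex) blast

lemma segment_subset_rays: "e \<in> segments R \<Longrightarrow> e \<subseteq> left_ray_of e \<union> right_ray_of e"
  using segment_rays(5) by blast

lemma hit_split_disjoint: "hit_segments \<inter> split_segments = {}"
  unfolding split_segments_def by blast

lemma split_segments_subset: "split_segments \<subseteq> segments R"
  and hit_segments_subset: "hit_segments \<subseteq> segments R"
  unfolding split_segments_def hit_segments_def by blast+

lemma hit_matching_matching: "G.matching hit_matching"
  unfolding is_matching_iff[symmetric] is_matching_def
proof (intro conjI)
  show "hit_matching \<subseteq> L \<times> segments R"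
    unfolding hit_matching_def using hitting_line hit_segments_subset by auto
  show "\<forall>(l, e)\<in>hit_matching. l \<inter> e \<noteq> {}"
    unfolding hit_matching_def using hitting_line line_point by fastforce
  show "inj_on snd hit_matching" unfolding hit_matching_def by (auto simp: inj_on_def)
  show "inj_on fst hit_matching"
  proof (rule inj_onI)
    fix a b assume "a \<in> hit_matching" "b \<in> hit_matching" "fst a = fst b"
    then obtain e e' where ab: "a = (hitting_line e, e)" "b = (hitting_line e', e')"
        "e \<in> hit_segments" "e' \<in> hit_segments" "hitting_line e = hitting_line e'"
      unfolding hit_matching_def by auto
    then have "line_point (hitting_line e) \<in> e \<inter> e'"
      using hitting_line[OF ab(3)] hitting_line[OF ab(4)] by simp
    moreover have "e \<in> segments R" "e' \<in> segments R" using ab(3,4) hit_segments_subset by blast+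
    ultimately have "e = e'" using segment_subset_rays segment_eq_if_rays_meet by blast
    then show "a = b" using ab by simp
  qed
qed

lemma split_lines_distinct:
  "inj_on left_line split_segments" "inj_on right_line split_segments"
  "left_line ` split_segments \<inter> right_line ` split_segments = {}"
proof -
  note same = segment_eq_if_rays_meet and split_SE = split_segments_subset
  show "inj_on left_line split_segments"
  proof (rule inj_onI)
    fix e e' assume "e \<in> split_segments" "e' \<in> split_segments" "left_line e = left_line e'"
    then show "e = e'" using left_line same split_SE by (metis UnI1 subsetD)
  qed
  show "inj_on right_line split_segments"
  proof (rule inj_onI)
    fix e e' assume "e \<in> split_segments" "e' \<in> split_segments" "right_line e = right_line e'"
    then show "e = e'" using right_line same split_SE by (metis UnI2 subsetD)
  qed
  show "left_line ` split_segments \<inter> right_line ` split_segments = {}"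
  proof (rule ccontr)
    assume "left_line ` split_segments \<inter> right_line ` split_segments \<noteq> {}"
    then obtain e e' where ee: "e \<in> split_segments" "e' \<in> split_segments" "left_line e = right_line e'"
      by blast
    then have p: "line_point (left_line e) \<in> left_ray_of e" "line_point (left_line e) \<in> right_ray_of e'"
      using left_line right_line by metis+
    then have "e = e'" using same ee(1,2) split_SE by blast
    then have "line_point (left_line e) \<in> e" using p segment_rays(5) ee(1) split_SE by blast
    then have "e \<in> hit_segments"
      using left_line[OF ee(1)] ee(1) split_SE unfolding hit_segments_def by blast
    then show False using ee(1) hit_split_disjoint by blast
  qed
qed

lemma hitting_lines_not_split_lines:
  assumes "e \<in> hit_segments" "e' \<in> split_segments"
  shows "hitting_line e \<noteq> left_line e'" "hitting_line e \<noteq> right_line e'"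
proof -
  have "e \<noteq> e'" using assms hit_split_disjoint by blast
  have on_e: "line_point (hitting_line e) \<in> left_ray_of e \<union> right_ray_of e"
    using hitting_line[OF assms(1)] segment_subset_rays hit_segments_subset assms(1) by blast
  show "hitting_line e \<noteq> left_line e'" "hitting_line e \<noteq> right_line e'"
    using segment_eq_if_rays_meet[OF _ _ on_e] left_line[OF assms(2)] right_line[OF assms(2)]
      assms hit_segments_subset split_segments_subset \<open>e \<noteq> e'\<close> by (metis UnI1 UnI2 subsetD)+
qed

lemma hit_config: "G.config hit_matching split_segments left_line right_line"
  unfolding G.config_def
proof (intro conjI)
  have fst_hit: "fst ` hit_matching = hitting_line ` hit_segments"
    and snd_hit: "snd ` hit_matching = hit_segments"
    unfolding hit_matching_def by force+
  show "G.matching hit_matching" by (rule hit_matching_matching)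
  show "split_segments \<subseteq> segments R" by (rule split_segments_subset)
  show "left_line ` split_segments \<subseteq> L" "right_line ` split_segments \<subseteq> L"
    using left_line right_line by auto
  show "inj_on left_line split_segments" "inj_on right_line split_segments"
    "left_line ` split_segments \<inter> right_line ` split_segments = {}"
    by (fact split_lines_distinct)+
  show "fst ` hit_matching \<inter> left_line ` split_segments = {}"
    "fst ` hit_matching \<inter> right_line ` split_segments = {}"
    unfolding fst_hit using hitting_lines_not_split_lines by blast+
  show "snd ` hit_matching \<inter> split_segments = {}" unfolding snd_hit by (rule hit_split_disjoint)
  show "\<forall>e\<in>split_segments. line_x (left_line e) \<le> seg_hi e \<and> seg_lo e \<le> line_x (right_line e)"
    using left_line right_line fst_line_point by (metis mem_left_ray_of_iff mem_right_ray_of_iff)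
qed

lemma off_line_point_exists:
  assumes e: "e \<in> segments R - (hit_segments \<union> split_segments)"
  shows "\<exists>p\<in>P - line_point ` L. snd p = seg_y e"
proof (rule ccontr)
  assume none: "\<not> ?thesis"
  have eSE: "e \<in> segments R" using e by blast
  have "left_ray_of e \<inter> P \<noteq> {}" "right_ray_of e \<inter> P \<noteq> {}"
    using hit segment_rays(1,2)[OF eSE] unfolding hitting_set_def by blast+
  then obtain p1 p2 where p: "p1 \<in> P" "p1 \<in> left_ray_of e" "p2 \<in> P" "p2 \<in> right_ray_of e"
    by blast
  then have "snd p1 = seg_y e" "snd p2 = seg_y e"
    by (simp_all add: mem_left_ray_of_iff mem_right_ray_of_iff)
  then have "p1 \<in> line_point ` L" "p2 \<in> line_point ` L" using none p(1,3) by blast+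
  then obtain u v where "u \<in> L" "line_point u \<in> left_ray_of e" "v \<in> L" "line_point v \<in> right_ray_of e"
    using p(2,4) by blast
  then have "e \<in> hit_segments \<union> split_segments" using eSE unfolding split_segments_def by blast
  then show False using e by blast
qed

text \<open>A segment that is neither hit nor split has a ray hit by a point of P other than the chosen
  line points, and such points are distinct for distinct segments since they lie at their heights.\<close>
lemma card_hitting_set_ge:
  "card L + card (segments R) \<le> card P + card hit_matching + card split_segments"
proof -
  define rest where "rest = segments R - (hit_segments \<union> split_segments)"
  define off_line where "off_line = P - line_point ` L"
  have "finite P" using hit by (simp add: hitting_set_def)
  define q where "q e = (SOME p. p \<in> off_line \<and> snd p = seg_y e)" for e
  have q: "q e \<in> off_line \<and> snd (q e) = seg_y e" if "e \<in> rest" for e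
    unfolding q_def by (rule someI_ex)
      (use off_line_point_exists[of e] that in \<open>auto simp: rest_def off_line_def\<close>)
  have "inj_on q rest"
  proof (rule inj_onI)
    fix e e' assume "e \<in> rest" "e' \<in> rest" "q e = q e'"
    then have "seg_y e = seg_y e'" using q by metis
    then show "e = e'" using segment_eqI \<open>e \<in> rest\<close> \<open>e' \<in> rest\<close> unfolding rest_def by blast
  qed
  moreover have "q ` rest \<subseteq> off_line" using q by blast
  moreover have "finite off_line" unfolding off_line_def using \<open>finite P\<close> by simp
  ultimately have "card rest \<le> card off_line" by (rule card_inj_on_le)
  have line_points: "line_point ` L \<subseteq> P" "card (line_point ` L) = card L"
    using line_point inj_on_line_point by (auto simp: card_image)
  then have "card off_line = card P - card L"
    unfolding off_line_def using finite_L by (simp add: card_Diff_subset)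
  moreover have "card L \<le> card P" using line_points \<open>finite P\<close> by (metis card_mono)
  ultimately have "card rest + card L \<le> card P"
    using \<open>card rest \<le> card off_line\<close> by linarith
  moreover have "card (segments R) = card rest + card hit_segments + card split_segments"
  proof -
    note subsets = hit_segments_subset split_segments_subset
    then have "card (segments R) = card rest + card (hit_segments \<union> split_segments)"
      unfolding rest_def using finite_segments
      by (metis Diff_partition card_Un_disjoint Diff_disjoint finite_Diff finite_subset le_sup_iff add.commute)
    also have "card (hit_segments \<union> split_segments) = card hit_segments + card split_segments"
      using subsets finite_segments hit_split_disjoint by (meson card_Un_disjoint finite_subset)
    finally show ?thesis by simp
  qed
  moreover have "card hit_matching = card hit_segments"
    unfolding hit_matching_def by (rule card_image) (auto simp: inj_on_def)
  ultimately show ?thesis by linarith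
qed

end

lemma optimal_config_exists:
  "\<exists>N Es lw rw. G.config N Es lw rw \<and> max_matching_size L (segments R) \<le> card N \<and>
     min_hitting_set (L \<union> R) (config_points N Es lw rw)"
proof -
  have "G.config {} {} id id" by (simp add: G.config_def G.matching_def)
  then obtain P0 where P0: "min_hitting_set (L \<union> R) P0"
    using config_points_hitting min_hitting_set_exists by blast
  then have hit: "hitting_set (L \<union> R) P0" by (simp add: min_hitting_set_def)
  obtain M where M: "G.matching M" "card M = max_matching_size L (segments R)"
    using max_matching_size_attained[OF finite_L finite_segments] is_matching_iff by blast
  obtain N Es lw rw where V: "G.config N Es lw rw" "card M \<le> card N"
      "card (hit_matching P0) + card (split_segments P0) \<le> card N + card Es"
    using G.config_with_large_matching[OF hit_config[OF hit] M(1)] by blast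
  have "card (config_points N Es lw rw) \<le> card P0"
    using card_config_points[OF V(1)] card_hitting_set_ge[OF hit] V(3) by linarith
  then have "min_hitting_set (L \<union> R) (config_points N Es lw rw)"
    using P0 config_points_hitting[OF V(1)] unfolding min_hitting_set_def by (meson le_trans)
  then show ?thesis using V M(2) by auto
qed

lemma matched_points_enumeration:
  assumes V: "G.config N Es lw rw" and m: "m \<le> card N"
  shows "\<exists>p l e. (\<forall>i<m. p i \<in> config_points N Es lw rw \<and> l i \<in> L \<and> e i \<in> segments R \<and>
                        p i \<in> l i \<inter> e i) \<and>
           inj_on p {..<m} \<and> inj_on l {..<m} \<and> inj_on e {..<m}"
proof -
  have N: "N \<subseteq> L \<times> segments R" "inj_on fst N" "inj_on snd N"
    "\<forall>q\<in>N. seg_lo (snd q) \<le> line_x (fst q) \<and> line_x (fst q) \<le> seg_hi (snd q)"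
    using V by (simp_all add: G.config_def G.matching_def G.adj_def)
  obtain N1 where N1: "N1 \<subseteq> N" "card N1 = m"
    using m by (meson obtain_subset_with_card_n)
  have "finite N1" using N1(1) config_finite(1)[OF V] by (rule finite_subset)
  then obtain h where h: "bij_betw h {..<m} N1"
    using ex_bij_betw_nat_finite N1(2) by (metis lessThan_atLeast0)
  then have hN: "h i \<in> N" if "i < m" for i using N1(1) that bij_betwE by blast
  define l where "l i = fst (h i)" for i
  define e where "e i = snd (h i)" for i
  define p where "p i = (line_x (l i), seg_y (e i))" for i
  have mem: "p i \<in> config_points N Es lw rw \<and> l i \<in> L \<and> e i \<in> segments R \<and> p i \<in> l i \<inter> e i"
    if "i < m" for i
  proof -
    have "l i \<in> L" "e i \<in> segments R" using hN[OF that] N(1) unfolding l_def e_def by auto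
    moreover have "p i \<in> config_points N Es lw rw"
      using hN[OF that] unfolding p_def l_def e_def config_points_def by blast
    moreover have "p i \<in> l i \<inter> e i"
      using calculation N(4) hN[OF that] mem_line_iff mem_segment_iff
      unfolding p_def l_def e_def by auto
    ultimately show ?thesis by blast
  qed
  have inj_h: "inj_on h {..<m}" using h by (simp add: bij_betw_def)
  have "h ` {..<m} \<subseteq> N" using hN by blast
  then have inj_l: "inj_on l {..<m}" and inj_e: "inj_on e {..<m}"
    using comp_inj_on[OF inj_h] N(2,3) inj_on_subset unfolding l_def e_def comp_def by blast+
  have "inj_on p {..<m}"
  proof (rule inj_onI)
    fix i j assume ij: "i \<in> {..<m}" "j \<in> {..<m}" "p i = p j"
    then have "line_x (l i) = line_x (l j)" unfolding p_def by simp
    then have "l i = l j" using line_x_inj mem ij(1,2) by (meson inj_onD lessThan_iff)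
    then show "i = j" by (rule inj_onD[OF inj_l _ ij(1,2)])
  qed
  then show ?thesis using mem inj_l inj_e by blast
qed

end

theorem mainTheorem7:
  fixes L R :: "(real \<times> real) set set"
  assumes "finite L" and "\<forall>l\<in>L. vertical_line l"
    and "finite R" and "paired_rays R"
  shows "\<exists>P. min_hitting_set (L \<union> R) P \<and>
           (\<exists>p l e. (\<forall>i < max_matching_size L (segments R).
                        p i \<in> P \<and> l i \<in> L \<and> e i \<in> segments R \<and> p i \<in> l i \<inter> e i) \<and>
                    inj_on p {..< max_matching_size L (segments R)} \<and>
                    inj_on l {..< max_matching_size L (segments R)} \<and>
                    inj_on e {..< max_matching_size L (segments R)})"
proof -
  interpret lines_and_rays L R using assms by unfold_locales
  obtain N Es lw rw where V: "G.config N Es lw rw" and m: "max_matching_size L (segments R) \<le> card N"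
    and "min_hitting_set (L \<union> R) (config_points N Es lw rw)"
    using optimal_config_exists by blast
  with matched_points_enumeration[OF V m] show ?thesis by blast
qed

end
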